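(* Let $\mathcal{N}=\{1,\dots,N\}$ be a finite set of blocks with centers $\bm{r}_n\in\mathbb{R}^3$, $\mathcal{I}=\{1,\dots,I\}$ a finite set of users, $\gamma_{n,n'}=\|\bm{r}_n-\bm{r}_{n'}\|$. Fix a phase shift vector $\bm{c}$, pairwise distinct real numbers $\mu_1,\dots,\mu_N$ (the mean RSS values $\mu_n=\mu_n(\bm{c})$), $\sigma>0$, and for each user $i$ prior probabilities $p_{i,n}>0$ with $\sum_{n}p_{i,n}=1$. Let $\mathbb{P}(s\mid\bm{c},n)=\frac{1}{\sqrt{2\pi\sigma^2}}e^{-(s-\mu_n)^2/(2\sigma^2)}$. For a decision function $\mathcal{L}$ (a map $(i,n',s_i)\mapsto\mathcal{L}(n'\mid\bm{c},s_i,\{p_{i,n}\})\in\{0,1\}$ with $\sum_{n'}\mathcal{L}(n'\mid\bm{c},s_i,\{p_{i,n}\})=1$ for all $i,s_i$) let $$l(\bm{c},\mathcal{L})=\sum_{i\in\mathcal{I}}\sum_{\substack{n,n'\in\mathcal{N}\\ n\neq n'}}p_{i,n}\gamma_{n,n'}\int_{\mathbb{R}}\mathbb{P}(s_i\mid\bm{c},n)\,\mathcal{L}(n'\mid\bm{c},s_i,\{p_{i,n}\})\,ds_i,$$ and let $\mathcal{L}^*$ be a decision function minimizing $l(\bm{c},\cdot)$ (so $l(\bm{c},\mathcal{L}^* )=\inf_{\mathcal{L}}l(\bm{c},\mathcal{L})$). Define $$d_{i,n,n'}=\frac{(\mu_{n'}-\mu_n)^2-2\sigma^2\ln\frac{p_{i,n'}}{p_{i,n}}}{2\sigma|\mu_{n'}-\mu_n|},\qquad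 l_a(\bm{c})=\sum_{i\in\mathcal{I}}\sum_{\substack{n,n'\in\mathcal{N}\\ n\neq n'}}p_{i,n}\gamma_{n,n'}\,Q(d_{i,n,n'}),$$ where $Q(x)=\frac{1}{\sqrt{2\pi}}\int_x^\infty e^{-t^2/2}dt$ is the Gaussian Q function. Then $l_a(\bm{c})\ge l(\bm{c},\mathcal{L}^* )$.
   Context: This models RSS-based localization: the RSS measured by a user in block $n$ under phase shift vector $\bm{c}$ is Gaussian with mean $\mu_n(\bm{c})$ and variance $\sigma^2$; $p_{i,n}$ is the prior probability that user $i$ is in block $n$; $\gamma_{n,n'}$ is the loss of estimating block $n'$ when the true block is $n$. *)

theory Defs
  imports "HOL-Analysis.Analysis"
begin

definition gauss_pdf :: "real \<Rightarrow> real \<Rightarrow> real \<Rightarrow> real" where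
  "gauss_pdf m \<sigma> s = exp (- ((s - m)^2) / (2 * \<sigma>^2)) / sqrt (2 * pi * \<sigma>^2)"

definition Qfun :: "real \<Rightarrow> real" where
  "Qfun x = (1 / sqrt (2 * pi)) * (LBINT t:{x..}. exp (- (t^2) / 2))"

text \<open>Decision functions: L i n' s is the indicator of deciding block n' for user i with RSS s.
  Measurability in s is required so that the integrals in the loss are meaningful.\<close>
definition decision_fun :: "nat set \<Rightarrow> nat set \<Rightarrow> (nat \<Rightarrow> nat \<Rightarrow> real \<Rightarrow> real) \<Rightarrow> bool" where
  "decision_fun Users Blocks L \<longleftrightarrow>
     (\<forall>i\<in>Users. \<forall>n'\<in>Blocks. \<forall>s. L i n' s \<in> {0, 1}) \<and>
     (\<forall>i\<in>Users. \<forall>s. (\<Sum>n'\<in>Blocks. L i n' s) = 1) \<and>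
     (\<forall>i\<in>Users. \<forall>n'\<in>Blocks. L i n' \<in> borel_measurable lborel)"

definition loss :: "nat set \<Rightarrow> nat set \<Rightarrow> (nat \<Rightarrow> real^3) \<Rightarrow> (nat \<Rightarrow> real) \<Rightarrow> real
     \<Rightarrow> (nat \<Rightarrow> nat \<Rightarrow> real) \<Rightarrow> (nat \<Rightarrow> nat \<Rightarrow> real \<Rightarrow> real) \<Rightarrow> real" where
  "loss Users Blocks r \<mu> \<sigma> p L =
     (\<Sum>i\<in>Users. \<Sum>(n, n')\<in>{(n, n'). n \<in> Blocks \<and> n' \<in> Blocks \<and> n \<noteq> n'}.
        p i n * dist (r n) (r n') *
        (\<integral>s. gauss_pdf (\<mu> n) \<sigma> s * L i n' s \<partial>lborel))"

definition d_val :: "real \<Rightarrow> (nat \<Rightarrow> real) \<Rightarrow> (nat \<Rightarrow> nat \<Rightarrow> real) \<Rightarrow> nat \<Rightarrow> nat \<Rightarrow> nat \<Rightarrow> real" where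
  "d_val \<sigma> \<mu> p i n n' =
     ((\<mu> n' - \<mu> n)^2 - 2 * \<sigma>^2 * ln (p i n' / p i n)) / (2 * \<sigma> * \<bar>\<mu> n' - \<mu> n\<bar>)"

definition loss_approx :: "nat set \<Rightarrow> nat set \<Rightarrow> (nat \<Rightarrow> real^3) \<Rightarrow> (nat \<Rightarrow> real) \<Rightarrow> real
     \<Rightarrow> (nat \<Rightarrow> nat \<Rightarrow> real) \<Rightarrow> real" where
  "loss_approx Users Blocks r \<mu> \<sigma> p =
     (\<Sum>i\<in>Users. \<Sum>(n, n')\<in>{(n, n'). n \<in> Blocks \<and> n' \<in> Blocks \<and> n \<noteq> n'}.
        p i n * dist (r n) (r n') * Qfun (d_val \<sigma> \<mu> p i n n'))"

end

theory Submission
  imports Defs "HOL-Probability.Distributions"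
begin

text \<open>
  The maximum a posteriori rule, which decides for user \<open>i\<close> the block \<open>n'\<close> maximising
  \<open>p i n' * gauss_pdf (\<mu> n') \<sigma> s\<close>, is a decision function, so by optimality its loss bounds
  that of \<open>Lstar\<close>. Under this rule, deciding \<open>n'\<close> when the true block is \<open>n\<close> forces
  \<open>p i n * gauss_pdf (\<mu> n) \<sigma> s \<le> p i n' * gauss_pdf (\<mu> n') \<sigma> s\<close>. Because both Gaussians
  have the same variance, the quadratic terms cancel and this event is a half-line in \<open>s\<close>,
  whose probability under \<open>N(\<mu> n, \<sigma>\<^sup>2)\<close> is exactly \<open>Qfun (d_val \<sigma> \<mu> p i n n')\<close>.
  Summing these pairwise bounds gives the approximate loss.
\<close>

lemma gauss_pdf_eq_normal_density: "gauss_pdf m \<sigma> = normal_density m \<sigma>"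
  by (rule ext) (simp add: gauss_pdf_def normal_density_def)

lemma gauss_pdf_affine_standardize:
  assumes "\<sigma> > 0" and "\<bar>e\<bar> = 1"
  shows "gauss_pdf m \<sigma> (m + e * \<sigma> * x) = exp (- (x^2) / 2) / (\<sigma> * sqrt (2 * pi))"
proof -
  have "e^2 = 1" using assms(2) by (metis abs_power2 one_power2 power2_abs)
  then have "(m + e * \<sigma> * x - m)^2 / (2 * \<sigma>^2) = x^2 / 2"
    using assms(1) by (simp add: power_mult_distrib field_simps)
  moreover have "sqrt (2 * pi * \<sigma>^2) = \<sigma> * sqrt (2 * pi)"
    using assms(1) by (simp add: real_sqrt_mult)
  ultimately show ?thesis unfolding gauss_pdf_def by (simp add: mult.commute)
qed

lemma gauss_pdf_tail_integral:
  assumes \<sigma>: "\<sigma> > 0" and e: "\<bar>e\<bar> = 1"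
  shows "(\<integral>s. gauss_pdf m \<sigma> s * indicator {s. d \<le> e * (s - m) / \<sigma>} s \<partial>lborel) = Qfun d"
proof -
  have "e * e = 1" using e by (metis abs_mult_self_eq mult_1)
  then have region: "indicator {s. d \<le> e * (s - m) / \<sigma>} (m + e * \<sigma> * x) = (indicator {d..} x :: real)" for x
    using \<sigma> by (simp add: indicator_def mult.assoc[symmetric])
  have "(\<integral>s. gauss_pdf m \<sigma> s * indicator {s. d \<le> e * (s - m) / \<sigma>} s \<partial>lborel)
      = \<sigma> * (\<integral>x. gauss_pdf m \<sigma> (m + e * \<sigma> * x) * indicator {s. d \<le> e * (s - m) / \<sigma>} (m + e * \<sigma> * x) \<partial>lborel)"
    using lborel_integral_real_affine[of "e * \<sigma>" "\<lambda>s. gauss_pdf m \<sigma> s * indicator {s. d \<le> e * (s - m) / \<sigma>} s" m]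
      \<sigma> e by (auto simp: abs_mult)
  also have "\<dots> = \<sigma> * (\<integral>x. 1 / (\<sigma> * sqrt (2 * pi)) * (indicator {d..} x * exp (- (x^2) / 2)) \<partial>lborel)"
    unfolding region gauss_pdf_affine_standardize[OF \<sigma> e] by (simp add: ac_simps)
  also have "\<dots> = Qfun d"
    unfolding Qfun_def set_lebesgue_integral_def using \<sigma> by simp
  finally show ?thesis .
qed

lemma weighted_gauss_pdf_as_exp:
  assumes "p > 0"
  shows "p * gauss_pdf m \<sigma> x = exp (ln p - (x - m)^2 / (2 * \<sigma>^2)) / sqrt (2 * pi * \<sigma>^2)"
  using assms unfolding gauss_pdf_def by (simp add: exp_diff exp_minus field_simps)

lemma weighted_gauss_pdf_le_iff:
  assumes \<sigma>: "\<sigma> > 0" and p: "p > 0" and q: "q > 0" and m: "m \<noteq> m'"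
  shows "p * gauss_pdf m \<sigma> x \<le> q * gauss_pdf m' \<sigma> x \<longleftrightarrow>
         ((m' - m)^2 - 2 * \<sigma>^2 * ln (q / p)) / (2 * \<sigma> * \<bar>m' - m\<bar>) \<le> sgn (m' - m) * (x - m) / \<sigma>"
proof -
  have scale: "2 * \<sigma> * \<bar>m' - m\<bar> > 0" using \<sigma> m by simp
  have normalizer: "sqrt (2 * pi * \<sigma>^2) > 0" using \<sigma> by simp
  have "p * gauss_pdf m \<sigma> x \<le> q * gauss_pdf m' \<sigma> x \<longleftrightarrow>
        ln p - (x - m)^2 / (2 * \<sigma>^2) \<le> ln q - (x - m')^2 / (2 * \<sigma>^2)"
    using normalizer unfolding weighted_gauss_pdf_as_exp[OF p] weighted_gauss_pdf_as_exp[OF q]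
    by (simp only: divide_le_cancel) auto
  also have "\<dots> \<longleftrightarrow> ((x - m')^2 - (x - m)^2) / (2 * \<sigma>^2) \<le> ln q - ln p"
    by (simp add: diff_divide_distrib) linarith
  also have "\<dots> \<longleftrightarrow> (x - m')^2 - (x - m)^2 \<le> 2 * \<sigma>^2 * (ln q - ln p)"
    using \<sigma> by (simp add: pos_divide_le_eq mult.commute)
  also have "\<dots> \<longleftrightarrow> (m' - m)^2 - 2 * \<sigma>^2 * ln (q / p) \<le> 2 * (m' - m) * (x - m)"
    using p q by (simp add: ln_div algebra_simps power2_eq_square)
  also have "\<dots> \<longleftrightarrow> ((m' - m)^2 - 2 * \<sigma>^2 * ln (q / p)) / (2 * \<sigma> * \<bar>m' - m\<bar>)
                    \<le> 2 * (m' - m) * (x - m) / (2 * \<sigma> * \<bar>m' - m\<bar>)"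
    using scale by (simp add: divide_le_cancel)
  also have "2 * (m' - m) * (x - m) / (2 * \<sigma> * \<bar>m' - m\<bar>) = sgn (m' - m) * (x - m) / \<sigma>"
    using m \<sigma> by (simp add: sgn_if field_simps)
  finally show ?thesis .
qed

lemma gauss_pdf_integral_pairwise_region:
  assumes \<sigma>: "\<sigma> > 0" and "p > 0" and "q > 0" and m: "m \<noteq> m'"
  shows "(\<integral>s. gauss_pdf m \<sigma> s * indicator {s. p * gauss_pdf m \<sigma> s \<le> q * gauss_pdf m' \<sigma> s} s \<partial>lborel)
       = Qfun (((m' - m)^2 - 2 * \<sigma>^2 * ln (q / p)) / (2 * \<sigma> * \<bar>m' - m\<bar>))"
proof -
  have "\<bar>sgn (m' - m)\<bar> = 1" using m by (simp add: abs_sgn_eq)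
  then show ?thesis
    using weighted_gauss_pdf_le_iff[OF assms] gauss_pdf_tail_integral[OF \<sigma>] by simp
qed

text \<open>Ties are broken towards the least index, which makes the rule measurable.\<close>
definition max_posterior_decision :: "nat set \<Rightarrow> (nat \<Rightarrow> real \<Rightarrow> real) \<Rightarrow> real \<Rightarrow> nat" where
  "max_posterior_decision B g s = (LEAST n. n \<in> B \<and> (\<forall>m\<in>B. g m s \<le> g n s))"

lemma max_posterior_decision_maximal:
  assumes "finite B" and "B \<noteq> {}"
  shows "max_posterior_decision B g s \<in> B \<and> (\<forall>m\<in>B. g m s \<le> g (max_posterior_decision B g s) s)"
proof -
  have "Max ((\<lambda>m. g m s) ` B) \<in> (\<lambda>m. g m s) ` B" using assms by simp
  then obtain n where "n \<in> B" and "g n s = Max ((\<lambda>m. g m s) ` B)" by auto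
  then have "n \<in> B \<and> (\<forall>m\<in>B. g m s \<le> g n s)" using assms(1) by simp
  then show ?thesis unfolding max_posterior_decision_def by (rule LeastI)
qed

lemma measurable_max_posterior_decision:
  assumes "finite B" and [measurable]: "\<And>n. g n \<in> borel_measurable borel"
  shows "max_posterior_decision B g \<in> measurable borel (count_space UNIV)"
  unfolding max_posterior_decision_def[abs_def] using assms(1) by measurable

definition max_posterior_rule :: "nat set \<Rightarrow> (nat \<Rightarrow> nat \<Rightarrow> real \<Rightarrow> real) \<Rightarrow> nat \<Rightarrow> nat \<Rightarrow> real \<Rightarrow> real" where
  "max_posterior_rule B g i n' = indicator {s. max_posterior_decision B (g i) s = n'}"

lemma decision_fun_max_posterior_rule:
  assumes "finite B" and "B \<noteq> {}" and g: "\<And>i n. g i n \<in> borel_measurable borel"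
  shows "decision_fun Users B (max_posterior_rule B g)"
  unfolding decision_fun_def
proof (intro conjI ballI allI)
  fix i n' s
  show "max_posterior_rule B g i n' s \<in> {0, 1}" by (simp add: max_posterior_rule_def indicator_def)
next
  fix i s
  have "max_posterior_decision B (g i) s \<in> B" using max_posterior_decision_maximal[OF assms(1,2)] by blast
  then show "(\<Sum>n'\<in>B. max_posterior_rule B g i n' s) = 1"
    using assms(1) by (simp add: max_posterior_rule_def indicator_def)
next
  fix i n'
  have [measurable]: "max_posterior_decision B (g i) \<in> measurable borel (count_space UNIV)"
    using measurable_max_posterior_decision[OF assms(1) g] .
  show "max_posterior_rule B g i n' \<in> borel_measurable lborel"
    unfolding max_posterior_rule_def by measurable
qed

lemma max_posterior_rule_le_pairwise_indicator:
  assumes "finite B" and "n \<in> B"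
  shows "max_posterior_rule B g i n' s \<le> indicator {s. g i n s \<le> g i n' s} s"
  using max_posterior_decision_maximal[OF assms(1), of "g i" s] assms(2)
  by (auto simp: max_posterior_rule_def indicator_def)

lemma integrable_gauss_pdf_mult_indicator:
  assumes "\<sigma> > 0" and "S \<in> sets borel"
  shows "integrable lborel (\<lambda>s. gauss_pdf m \<sigma> s * indicator S s)"
  using assms by (intro integrable_real_mult_indicator) (auto simp: gauss_pdf_eq_normal_density)

lemma max_posterior_rule_error_le_Qfun:
  fixes \<mu> :: "nat \<Rightarrow> real" and \<sigma> :: real and p :: "nat \<Rightarrow> nat \<Rightarrow> real"
  defines "g \<equiv> \<lambda>i n s. p i n * gauss_pdf (\<mu> n) \<sigma> s"
  assumes B: "finite B" and \<sigma>: "\<sigma> > 0" and "n \<in> B" and "\<mu> n \<noteq> \<mu> n'"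
    and p: "p i n > 0" and p': "p i n' > 0"
  shows "(\<integral>s. gauss_pdf (\<mu> n) \<sigma> s * max_posterior_rule B g i n' s \<partial>lborel) \<le> Qfun (d_val \<sigma> \<mu> p i n n')"
proof -
  have g_measurable[measurable]: "g i n \<in> borel_measurable borel" for i n
    unfolding g_def by (simp add: gauss_pdf_eq_normal_density)
  have [measurable]: "max_posterior_decision B (g i) \<in> measurable borel (count_space UNIV)"
    using measurable_max_posterior_decision[OF B g_measurable] .
  have "(\<integral>s. gauss_pdf (\<mu> n) \<sigma> s * max_posterior_rule B g i n' s \<partial>lborel)
      \<le> (\<integral>s. gauss_pdf (\<mu> n) \<sigma> s * indicator {s. g i n s \<le> g i n' s} s \<partial>lborel)"
  proof (rule integral_mono)
    show "integrable lborel (\<lambda>s. gauss_pdf (\<mu> n) \<sigma> s * max_posterior_rule B g i n' s)"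
      unfolding max_posterior_rule_def by (intro integrable_gauss_pdf_mult_indicator[OF \<sigma>]) measurable
    show "integrable lborel (\<lambda>s. gauss_pdf (\<mu> n) \<sigma> s * indicator {s. g i n s \<le> g i n' s} s)"
      by (intro integrable_gauss_pdf_mult_indicator[OF \<sigma>]) measurable
    show "gauss_pdf (\<mu> n) \<sigma> s * max_posterior_rule B g i n' s
          \<le> gauss_pdf (\<mu> n) \<sigma> s * indicator {s. g i n s \<le> g i n' s} s" for s
      using max_posterior_rule_le_pairwise_indicator[OF B \<open>n \<in> B\<close>]
      by (intro mult_left_mono) (auto simp: gauss_pdf_eq_normal_density)
  qed
  also have "\<dots> = Qfun (d_val \<sigma> \<mu> p i n n')"
    unfolding g_def d_val_def using gauss_pdf_integral_pairwise_region[OF \<sigma> p p' \<open>\<mu> n \<noteq> \<mu> n'\<close>] .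
  finally show ?thesis .
qed

lemma loss_max_posterior_rule_le_loss_approx:
  assumes "finite Blocks" and "inj_on \<mu> Blocks" and "\<sigma> > 0"
    and "\<forall>i\<in>Users. \<forall>n\<in>Blocks. p i n > 0"
  shows "loss Users Blocks r \<mu> \<sigma> p (max_posterior_rule Blocks (\<lambda>i n s. p i n * gauss_pdf (\<mu> n) \<sigma> s))
         \<le> loss_approx Users Blocks r \<mu> \<sigma> p"
  unfolding loss_def loss_approx_def
proof (intro sum_mono, clarify)
  fix i n n' assume "i \<in> Users" "n \<in> Blocks" "n' \<in> Blocks" "n \<noteq> n'"
  with assms have "p i n > 0" "p i n' > 0" "\<mu> n \<noteq> \<mu> n'"
    by (auto dest: inj_onD)
  with assms(1,3) \<open>n \<in> Blocks\<close> show "p i n * dist (r n) (r n') *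
      (\<integral>s. gauss_pdf (\<mu> n) \<sigma> s * max_posterior_rule Blocks (\<lambda>i n s. p i n * gauss_pdf (\<mu> n) \<sigma> s) i n' s \<partial>lborel)
    \<le> p i n * dist (r n) (r n') * Qfun (d_val \<sigma> \<mu> p i n n')"
    by (intro mult_left_mono max_posterior_rule_error_le_Qfun) auto
qed

theorem proposition2:
  fixes N I :: nat and r :: "nat \<Rightarrow> real^3" and \<mu> :: "nat \<Rightarrow> real" and \<sigma> :: real
    and p :: "nat \<Rightarrow> nat \<Rightarrow> real" and Lstar :: "nat \<Rightarrow> nat \<Rightarrow> real \<Rightarrow> real"
  assumes mu_distinct: "inj_on \<mu> {1..N}"
    and sigma_pos: "\<sigma> > 0"
    and p_pos: "\<forall>i\<in>{1..I}. \<forall>n\<in>{1..N}. p i n > 0"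
    and p_sum: "\<forall>i\<in>{1..I}. (\<Sum>n\<in>{1..N}. p i n) = 1"
    and Lstar_dec: "decision_fun {1..I} {1..N} Lstar"
    and Lstar_opt: "\<forall>L. decision_fun {1..I} {1..N} L \<longrightarrow>
                      loss {1..I} {1..N} r \<mu> \<sigma> p Lstar \<le> loss {1..I} {1..N} r \<mu> \<sigma> p L"
  shows "loss_approx {1..I} {1..N} r \<mu> \<sigma> p \<ge> loss {1..I} {1..N} r \<mu> \<sigma> p Lstar"
proof (cases "N = 0")
  case True
  then show ?thesis by (simp add: loss_def loss_approx_def)
next
  case False
  let ?L = "max_posterior_rule {1..N} (\<lambda>i n s. p i n * gauss_pdf (\<mu> n) \<sigma> s)"
  have "decision_fun {1..I} {1..N} ?L"
    using False by (intro decision_fun_max_posterior_rule) (auto simp: gauss_pdf_eq_normal_density)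
  then have "loss {1..I} {1..N} r \<mu> \<sigma> p Lstar \<le> loss {1..I} {1..N} r \<mu> \<sigma> p ?L"
    using Lstar_opt by blast
  also have "\<dots> \<le> loss_approx {1..I} {1..N} r \<mu> \<sigma> p"
    using mu_distinct sigma_pos p_pos by (intro loss_max_posterior_rule_le_loss_approx) auto
  finally show ?thesis .
qed

end
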